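(* Let $\mathcal A=\{A_s\}_{s\in\mathbf S}\subset CQ(\mathbf X,\mathcal H)$ be an AVcqC with $\mathbf S$ finite, $l\in\mathbb N$, $\mu_l$ an $(l,M_l)$-random code for $\mathcal A$ and $0\le\varepsilon_l<1$ with $$\inf_{s^l\in\mathbf S^l}\int\frac1{M_l}\sum_{i=1}^{M_l}\mathrm{tr}(A_{s^l}(x_i^l)D_i^l)\,d\mu_l\big((x_i^l,D_i^l)_{i=1}^{M_l}\big)\ge1-\varepsilon_l.$$ Let $n,m\in\mathbb R$ be such that $l^n\in\mathbb N$. If $4\varepsilon_l\le l^{-m}$ and $2\log|\mathbf S|<l^{n-m-1}$, then there exist $l^n$ deterministic $(l,M_l)$-codes $(x_{i,j}^l,D_{i,j}^l)_{i=1}^{M_l}$, $1\le j\le l^n$, such that $$\frac1{l^n}\sum_{j=1}^{l^n}\frac1{M_l}\sum_{i=1}^{M_l}\mathrm{tr}(A_{s^l}(x_{i,j}^l)D_{i,j}^l)\ge1-l^{-m}\quad\text{for all }s^l\in\mathbf S^l.$$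
   Context: $\mathbf X$ finite, $\mathcal H$ finite-dimensional complex Hilbert space, $CQ(\mathbf X,\mathcal H)$ the maps $\mathbf X\to\mathcal S(\mathcal H)$; $A_{s^l}(x^l)=\bigotimes_iA_{s_i}(x_i)$. An $(l,M)$ deterministic code is $(x_i^l,D_i^l)_{i=1}^M$ with $x_i^l\in\mathbf X^l$, $D_i^l\ge0$ on $\mathcal H^{\otimes l}$, $\sum_iD_i^l\le\mathbf 1$; an $(l,M)$-random code is a probability measure on the set of such tuples (with a sigma-algebra making the success functions measurable). Logs base 2. *)

theory Defs
  imports "HOL-Probability.Probability" "Jordan_Normal_Form.Matrix"
begin

text \<open>Operators on the finite-dimensional Hilbert space C^d are d x d complex matrices.\<close>

definition mtrace :: "complex mat \<Rightarrow> complex" where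
  "mtrace A = (\<Sum>i<dim_row A. A $$ (i, i))"

definition psd :: "nat \<Rightarrow> complex mat \<Rightarrow> bool" where
  "psd d A \<longleftrightarrow> A \<in> carrier_mat d d \<and>
     (\<forall>v \<in> carrier_vec d. (conjugate v \<bullet> (A *\<^sub>v v)) \<in> \<real> \<and> 0 \<le> Re (conjugate v \<bullet> (A *\<^sub>v v)))"

definition density :: "nat \<Rightarrow> complex mat \<Rightarrow> bool" where
  "density d A \<longleftrightarrow> psd d A \<and> mtrace A = 1"

definition kron :: "complex mat \<Rightarrow> complex mat \<Rightarrow> complex mat" where
  "kron A B = mat (dim_row A * dim_row B) (dim_col A * dim_col B)
     (\<lambda>(i, j). A $$ (i div dim_row B, j div dim_col B) * B $$ (i mod dim_row B, j mod dim_col B))"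

definition tensor_list :: "complex mat list \<Rightarrow> complex mat" where
  "tensor_list As = foldr kron As (1\<^sub>m 1)"

definition cq_channel :: "nat \<Rightarrow> ('x \<Rightarrow> complex mat) \<Rightarrow> bool" where
  "cq_channel d W \<longleftrightarrow> (\<forall>x. density d (W x))"

definition prod_channel :: "('s \<Rightarrow> 'x \<Rightarrow> complex mat) \<Rightarrow> 's list \<Rightarrow> 'x list \<Rightarrow> complex mat" where
  "prod_channel A ss xs = tensor_list (map2 (\<lambda>s x. A s x) ss xs)"

definition msum :: "nat \<Rightarrow> complex mat list \<Rightarrow> complex mat" where
  "msum N Ds = foldr (+) Ds (0\<^sub>m N N)"

definition det_code :: "nat \<Rightarrow> nat \<Rightarrow> nat \<Rightarrow> ('x list \<times> complex mat) list \<Rightarrow> bool" where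
  "det_code d l M c \<longleftrightarrow> length c = M \<and>
     (\<forall>i<M. length (fst (c ! i)) = l \<and> psd (d ^ l) (snd (c ! i))) \<and>
     psd (d ^ l) (1\<^sub>m (d ^ l) - msum (d ^ l) (map snd c))"

definition avg_success :: "('s \<Rightarrow> 'x \<Rightarrow> complex mat) \<Rightarrow> 's list \<Rightarrow> ('x list \<times> complex mat) list \<Rightarrow> real" where
  "avg_success A ss c = (1 / real (length c)) *
     (\<Sum>i<length c. Re (mtrace (prod_channel A ss (fst (c ! i)) * snd (c ! i))))"

definition random_code :: "nat \<Rightarrow> ('s \<Rightarrow> 'x \<Rightarrow> complex mat) \<Rightarrow> nat \<Rightarrow> nat \<Rightarrow>
    ('x list \<times> complex mat) list measure \<Rightarrow> bool" where
  "random_code d A l M \<mu> \<longleftrightarrow> prob_space \<mu> \<and> space \<mu> \<subseteq> {c. det_code d l M c} \<and>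
     (\<forall>ss. length ss = l \<longrightarrow> (\<lambda>c. avg_success A ss c) \<in> borel_measurable \<mu>)"

end

theory Submission
  imports Defs
begin

text \<open>
  For a fixed state sequence s^l, the failure 1 - success of the random code lies in [0, 1] and
  has mean at most \<epsilon>, so by convexity 2^failure has mean at most 1 + \<epsilon>. Picking the
  N = l^n deterministic codes one after another, each at a point where the potential
  \<Sum>_{s^l} 2^(accumulated failure) does not exceed its mean, keeps the potential below
  |S|^l (1 + \<epsilon>)^N. The hypotheses make this smaller than 2^(N l^-m), so for every s^l the
  total failure stays below N l^-m.

  That success probabilities lie in [0, 1] needs positivity of the product states A_{s^l}(x^l):
  positive semidefinite matrices are Gram matrices (by Cholesky-type elimination), and Gram
  representations survive Kronecker products.
\<close>

section \<open>Positive semidefinite kernels\<close>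

definition quad_form :: "nat \<Rightarrow> (nat \<Rightarrow> nat \<Rightarrow> complex) \<Rightarrow> (nat \<Rightarrow> complex) \<Rightarrow> complex" where
  "quad_form n A u = (\<Sum>j<n. \<Sum>i<n. cnj (u j) * A j i * u i)"

definition psd_kernel :: "nat \<Rightarrow> (nat \<Rightarrow> nat \<Rightarrow> complex) \<Rightarrow> bool" where
  "psd_kernel n A \<longleftrightarrow> (\<forall>u. quad_form n A u \<in> \<real> \<and> 0 \<le> Re (quad_form n A u))"

lemma if_zero_mult_distrib:
  "(if b then x else 0) * (y :: 'a :: mult_zero) = (if b then x * y else 0)"
  "y * (if b then x else 0) = (if b then y * x else 0)"
  "cnj (if b then z else 0) = (if b then cnj z else 0)"
  by auto

lemma quad_form_add_unit:
  assumes "p < n"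
  shows "quad_form n A (\<lambda>k. v k + (if k = p then c else 0)) =
     quad_form n A v + cnj c * (\<Sum>i<n. A p i * v i) + (\<Sum>j<n. cnj (v j) * A j p) * c + cnj c * A p p * c"
proof -
  have "quad_form n A (\<lambda>k. v k + (if k = p then c else 0)) =
    (\<Sum>j<n. \<Sum>i<n. cnj (v j) * A j i * v i + cnj (v j) * A j i * (if i = p then c else 0)
      + (if j = p then cnj c else 0) * A j i * v i
      + (if j = p then cnj c else 0) * A j i * (if i = p then c else 0))"
    unfolding quad_form_def by (intro sum.cong refl) (auto simp: algebra_simps)
  also have "\<dots> = quad_form n A v + (\<Sum>j<n. \<Sum>i<n. cnj (v j) * A j i * (if i = p then c else 0))
     + (\<Sum>j<n. \<Sum>i<n. (if j = p then cnj c else 0) * A j i * v i)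
     + (\<Sum>j<n. \<Sum>i<n. (if j = p then cnj c else 0) * A j i * (if i = p then c else 0))"
    by (simp add: sum.distrib quad_form_def)
  also have "(\<Sum>j<n. \<Sum>i<n. cnj (v j) * A j i * (if i = p then c else 0)) = (\<Sum>j<n. cnj (v j) * A j p) * c"
    using assms by (simp add: sum_distrib_right if_zero_mult_distrib cong: if_cong)
  also have "(\<Sum>j<n. \<Sum>i<n. (if j = p then cnj c else 0) * A j i * v i) = cnj c * (\<Sum>i<n. A p i * v i)"
    using assms by (subst sum.swap) (simp add: sum_distrib_left if_zero_mult_distrib mult.assoc cong: if_cong)
  also have "(\<Sum>j<n. \<Sum>i<n. (if j = p then cnj c else 0) * A j i * (if i = p then c else 0)) = cnj c * A p p * c"
    using assms by (simp add: if_zero_mult_distrib cong: if_cong)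
  finally show ?thesis by (simp add: algebra_simps)
qed

lemma quad_form_two_units:
  assumes "i < n" "j < n"
  shows "quad_form n A (\<lambda>k. (if k = i then a else 0) + (if k = j then b else 0)) =
    cnj a * A i i * a + cnj b * A j i * a + cnj a * A i j * b + cnj b * A j j * b"
proof -
  have "quad_form n A (\<lambda>k. if k = i then a else 0) = cnj a * A i i * a"
    using quad_form_add_unit[of i n A "\<lambda>k. 0" a] assms by (simp add: quad_form_def)
  then show ?thesis
    using quad_form_add_unit[of j n A "\<lambda>k. if k = i then a else 0" b] assms
    by (simp add: if_zero_mult_distrib cong: if_cong)
qed

lemma psd_kernel_diag:
  assumes "psd_kernel n A" "i < n"
  shows "A i i \<in> \<real>" "0 \<le> Re (A i i)"
proof -
  have "quad_form n A (\<lambda>k. (if k = i then 1 else 0) + (if k = i then 0 else 0)) = A i i"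
    using quad_form_two_units[OF assms(2) assms(2), of A 1 0] by simp
  then show "A i i \<in> \<real>" "0 \<le> Re (A i i)"
    using assms(1) unfolding psd_kernel_def by (metis (no_types))+
qed

lemma psd_kernel_hermitian:
  assumes A: "psd_kernel n A" and "i < n" "j < n"
  shows "A j i = cnj (A i j)"
proof -
  have "quad_form n A (\<lambda>k. (if k = i then 1 else 0) + (if k = j then 1 else 0)) = A i i + A j i + A i j + A j j"
    using quad_form_two_units[OF assms(2,3), of A 1 1] by simp
  then have "A i i + A j i + A i j + A j j \<in> \<real>"
    using A unfolding psd_kernel_def by metis
  moreover have "quad_form n A (\<lambda>k. (if k = i then 1 else 0) + (if k = j then \<i> else 0))
      = A i i - \<i> * A j i + \<i> * A i j + A j j"
    using quad_form_two_units[OF assms(2,3), of A 1 \<i>] by (simp add: algebra_simps)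
  then have "A i i - \<i> * A j i + \<i> * A i j + A j j \<in> \<real>"
    using A unfolding psd_kernel_def by metis
  moreover have "Im (A i i) = 0" "Im (A j j) = 0"
    using psd_kernel_diag[OF A] assms complex_is_Real_iff by auto
  ultimately have "Im (A j i) + Im (A i j) = 0" "Re (A i j) - Re (A j i) = 0"
    by (auto simp: complex_is_Real_iff)
  then show ?thesis by (intro complex_eqI) auto
qed

lemma psd_kernel_zero_diag:
  assumes A: "psd_kernel n A" and "p < n" "j < n" and App: "A p p = 0"
  shows "A j p = 0"
proof (rule ccontr)
  let ?z = "A j p"
  assume z: "?z \<noteq> 0"
  define s where "s = (Re (A j j) + 1) / (cmod ?z)\<^sup>2"
  define t where "t = - complex_of_real s * cnj ?z"
  have s: "s * (cmod ?z)\<^sup>2 = Re (A j j) + 1"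
    using z by (simp add: s_def)
  have "cnj t * A p j + A j p * t = - 2 * complex_of_real s * (?z * cnj ?z)"
    using psd_kernel_hermitian[OF A assms(3,2)] by (simp add: t_def algebra_simps)
  also have "?z * cnj ?z = complex_of_real ((cmod ?z)\<^sup>2)"
    using complex_norm_square[of ?z] by simp
  finally have cross: "cnj t * A p j + A j p * t = - 2 * complex_of_real (s * (cmod ?z)\<^sup>2)"
    by simp
  have "quad_form n A (\<lambda>k. (if k = j then 1 else 0) + (if k = p then t else 0))
      = A j j + (cnj t * A p j + A j p * t)"
    using quad_form_two_units[OF assms(3,2), of A 1 t] App by (simp add: add.assoc)
  then have "Re (quad_form n A (\<lambda>k. (if k = j then 1 else 0) + (if k = p then t else 0))) = - Re (A j j) - 2"
    unfolding cross s by simp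
  moreover have "0 \<le> Re (quad_form n A (\<lambda>k. (if k = j then 1 else 0) + (if k = p then t else 0)))"
    using A unfolding psd_kernel_def by blast
  ultimately show False
    using psd_kernel_diag(2)[OF A assms(3)] by linarith
qed

text \<open>For \<open>A p p = 0\<close> the quotient is 0, so the Schur complement is \<open>A\<close> itself.\<close>

definition schur_complement :: "(nat \<Rightarrow> nat \<Rightarrow> complex) \<Rightarrow> nat \<Rightarrow> nat \<Rightarrow> nat \<Rightarrow> complex" where
  "schur_complement A p = (\<lambda>i j. A i j - A i p * A p j / A p p)"

lemma psd_kernel_schur_complement:
  assumes A: "psd_kernel n A" and p: "p < n"
  shows "psd_kernel n (schur_complement A p)"
proof (cases "A p p = 0")
  case True
  then show ?thesis using A by (simp add: schur_complement_def)
next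
  case False
  have cnj_App: "cnj (A p p) = A p p"
    using psd_kernel_diag(1)[OF A p] by (simp add: Reals_cnj_iff)
  show ?thesis unfolding psd_kernel_def
  proof
    fix v
    define s where "s = (\<Sum>i<n. A p i * v i)"
    \<comment> \<open>completing the square in the coordinate \<open>p\<close>\<close>
    define c where "c = - s / A p p"
    have cnj_s: "(\<Sum>j<n. cnj (v j) * A j p) = cnj s"
      unfolding s_def by (auto simp: psd_kernel_hermitian[OF A p] mult.commute intro!: sum.cong)
    have "quad_form n (schur_complement A p) v
        = quad_form n A v - (\<Sum>j<n. \<Sum>i<n. cnj (v j) * A j p * (A p i * v i) / A p p)"
      unfolding quad_form_def schur_complement_def
      by (simp add: sum_subtractf[symmetric] algebra_simps)
    also have "\<dots> = quad_form n A v - (\<Sum>j<n. cnj (v j) * A j p) * s / A p p"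
      by (simp add: s_def sum_product sum_divide_distrib)
    also have "\<dots> = quad_form n A v - cnj s * s / A p p"
      by (simp only: cnj_s)
    also have "\<dots> = quad_form n A (\<lambda>k. v k + (if k = p then c else 0))"
    proof -
      have cnj_c: "cnj c = - cnj s / A p p"
        using cnj_App by (simp add: c_def)
      have "cnj c * s + cnj s * c + cnj c * A p p * c = - cnj s * s / A p p"
        unfolding cnj_c c_def using False by (simp add: field_simps)
      moreover have "quad_form n A (\<lambda>k. v k + (if k = p then c else 0))
          = quad_form n A v + (cnj c * s + cnj s * c + cnj c * A p p * c)"
        using quad_form_add_unit[OF p, of A v c] unfolding s_def[symmetric] cnj_s
        by (simp only: add.assoc)
      ultimately show ?thesis by simp
    qed
    finally show "quad_form n (schur_complement A p) v \<in> \<real> \<and> 0 \<le> Re (quad_form n (schur_complement A p) v)"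
      using A unfolding psd_kernel_def by presburger
  qed
qed

lemma schur_complement_pivot_zero:
  assumes A: "psd_kernel n A" and "p < n" "j < n"
  shows "schur_complement A p p j = 0 \<and> schur_complement A p j p = 0"
proof (cases "A p p = 0")
  case True
  then have "A j p = 0" "A p j = 0"
    using psd_kernel_zero_diag[OF A assms(2,3)] psd_kernel_hermitian[OF A assms(3,2)] by simp_all
  then show ?thesis by (simp add: schur_complement_def)
next
  case False
  then show ?thesis by (simp add: schur_complement_def)
qed

lemma psd_kernel_schur_split:
  assumes A: "psd_kernel n A" and p: "p < n" and "i < n" "j < n"
  defines "u \<equiv> \<lambda>k. A k p / complex_of_real (sqrt (Re (A p p)))"
  shows "A i j = schur_complement A p i j + u i * cnj (u j)"
proof (cases "A p p = 0")
  case True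
  then show ?thesis by (simp add: schur_complement_def u_def)
next
  case False
  define r where "r = sqrt (Re (A p p))"
  have "r * r = Re (A p p)"
    using psd_kernel_diag(2)[OF A p] by (simp add: r_def)
  have r_nonneg: "\<bar>r\<bar> = r"
    using psd_kernel_diag(2)[OF A p] by (simp add: r_def)
  from \<open>r * r = Re (A p p)\<close> have r: "complex_of_real r * complex_of_real r = A p p"
    using of_real_Re[OF psd_kernel_diag(1)[OF A p]] by (simp flip: of_real_mult)
  have "u i * cnj (u j) = A i p * A p j / A p p"
    using psd_kernel_hermitian[OF A assms(4) p] r_nonneg
    by (simp add: u_def r_def[symmetric] r[symmetric])
  then show ?thesis by (simp add: schur_complement_def)
qed

lemma schur_complement_supported:
  assumes A: "psd_kernel n A" and k: "k < n"
    and supp: "\<forall>i<n. \<forall>j<n. (Suc k \<le> i \<or> Suc k \<le> j) \<longrightarrow> A i j = 0"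
  shows "\<forall>i<n. \<forall>j<n. (k \<le> i \<or> k \<le> j) \<longrightarrow> schur_complement A k i j = 0"
proof (intro allI impI)
  fix i j assume ij: "i < n" "j < n" "k \<le> i \<or> k \<le> j"
  then consider "i = k" | "j = k" | "Suc k \<le> i" | "Suc k \<le> j" by linarith
  then show "schur_complement A k i j = 0"
  proof cases
    case 1
    then show ?thesis using schur_complement_pivot_zero[OF A k ij(2)] by simp
  next
    case 2
    then show ?thesis using schur_complement_pivot_zero[OF A k ij(1)] by simp
  next
    case 3
    then have "A i j = 0" "A i k = 0" using supp ij k by auto
    then show ?thesis by (simp add: schur_complement_def)
  next
    case 4
    then have "A i j = 0" "A k j = 0" using supp ij k by auto
    then show ?thesis by (simp add: schur_complement_def)
  qed
qed

text \<open>Cholesky-type elimination: splitting off the rank-one part of pivot column \<open>k\<close> leaves a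
  positive semidefinite Schur complement supported on the first \<open>k\<close> indices.\<close>

lemma psd_kernel_supported_gram:
  assumes "psd_kernel n A" and "\<forall>i<n. \<forall>j<n. (k \<le> i \<or> k \<le> j) \<longrightarrow> A i j = 0"
  shows "\<exists>(K::nat) w. \<forall>i<n. \<forall>j<n. A i j = (\<Sum>q<K. w q i * cnj (w q j))"
  using assms
proof (induction k arbitrary: A)
  case 0
  then show ?case by (intro exI[of _ "0::nat"]) auto
next
  case (Suc k)
  show ?case
  proof (cases "k < n")
    case False
    then show ?thesis using Suc by auto
  next
    case True
    let ?S = "schur_complement A k"
    have "\<forall>i<n. \<forall>j<n. (k \<le> i \<or> k \<le> j) \<longrightarrow> ?S i j = 0"
      using schur_complement_supported[OF Suc.prems(1) True Suc.prems(2)] .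
    then obtain K :: nat and w where w: "\<forall>i<n. \<forall>j<n. ?S i j = (\<Sum>q<K. w q i * cnj (w q j))"
      using Suc.IH[OF psd_kernel_schur_complement[OF Suc.prems(1) True]] by blast
    define u where "u = (\<lambda>i. A i k / complex_of_real (sqrt (Re (A k k))))"
    show ?thesis
    proof (intro exI[of _ "Suc K"] exI[of _ "w(K := u)"] allI impI)
      fix i j assume ij: "i < n" "j < n"
      have "(\<Sum>q<K. (w(K := u)) q i * cnj ((w(K := u)) q j)) = (\<Sum>q<K. w q i * cnj (w q j))"
        by (rule sum.cong) simp_all
      also have "\<dots> = ?S i j"
        using w ij by simp
      finally have "(\<Sum>q<Suc K. (w(K := u)) q i * cnj ((w(K := u)) q j)) = ?S i j + u i * cnj (u j)"
        by simp
      also have "\<dots> = A i j"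
        using psd_kernel_schur_split[OF Suc.prems(1) True ij] unfolding u_def by simp
      finally show "A i j = (\<Sum>q<Suc K. (w(K := u)) q i * cnj ((w(K := u)) q j))" ..
    qed
  qed
qed

lemma psd_kernel_gram:
  assumes "psd_kernel n A"
  shows "\<exists>(K::nat) w. \<forall>i<n. \<forall>j<n. A i j = (\<Sum>q<K. w q i * cnj (w q j))"
proof -
  have "\<forall>i<n. \<forall>j<n. (n \<le> i \<or> n \<le> j) \<longrightarrow> A i j = 0"
    by simp
  then show ?thesis
    by (rule psd_kernel_supported_gram[OF assms])
qed

section \<open>Gram matrices, traces and Kronecker products\<close>

definition is_gram_matrix :: "nat \<Rightarrow> complex mat \<Rightarrow> bool" where
  "is_gram_matrix n P \<longleftrightarrow> (\<exists>(K::nat) w. \<forall>i<n. \<forall>j<n. P $$ (i, j) = (\<Sum>q<K. w q i * cnj (w q j)))"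

lemma quad_form_mat:
  assumes "D \<in> carrier_mat n n"
  shows "conjugate (vec n u) \<bullet> (D *\<^sub>v vec n u) = quad_form n (\<lambda>i j. D $$ (i, j)) u"
proof -
  have Dv: "(D *\<^sub>v vec n u) $ j = (\<Sum>i<n. D $$ (j, i) * u i)" if "j < n" for j
    using assms that by (auto simp: scalar_prod_def atLeast0LessThan intro!: sum.cong)
  have "conjugate (vec n u) \<bullet> (D *\<^sub>v vec n u) = (\<Sum>j<n. cnj (u j) * (\<Sum>i<n. D $$ (j, i) * u i))"
    using assms by (auto simp: scalar_prod_def atLeast0LessThan Dv intro!: sum.cong)
  also have "\<dots> = quad_form n (\<lambda>i j. D $$ (i, j)) u"
    unfolding quad_form_def by (simp add: sum_distrib_left mult.assoc)
  finally show ?thesis .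
qed

lemma psd_imp_psd_kernel:
  assumes "psd n D"
  shows "psd_kernel n (\<lambda>i j. D $$ (i, j))"
  using assms vec_carrier unfolding psd_kernel_def psd_def by (metis quad_form_mat)

lemma psd_imp_is_gram_matrix: "psd n D \<Longrightarrow> is_gram_matrix n D"
  using psd_kernel_gram[OF psd_imp_psd_kernel] unfolding is_gram_matrix_def by simp

lemma mtrace_mult_psd_nonneg:
  assumes P: "is_gram_matrix n P" "P \<in> carrier_mat n n" and D: "psd n D"
  shows "0 \<le> Re (mtrace (P * D))"
proof -
  obtain K :: nat and w where w: "\<forall>i<n. \<forall>j<n. P $$ (i, j) = (\<Sum>q<K. w q i * cnj (w q j))"
    using P(1) unfolding is_gram_matrix_def by blast
  have Dc: "D \<in> carrier_mat n n"
    using D unfolding psd_def by simp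
  have "mtrace (P * D) = (\<Sum>i<n. \<Sum>k<n. P $$ (i, k) * D $$ (k, i))"
    unfolding mtrace_def using P(2) Dc by (auto simp: scalar_prod_def atLeast0LessThan intro!: sum.cong)
  also have "\<dots> = (\<Sum>i<n. \<Sum>k<n. \<Sum>q<K. cnj (w q k) * D $$ (k, i) * w q i)"
    using w by (auto simp: sum_distrib_left sum_distrib_right mult_ac intro!: sum.cong)
  also have "\<dots> = (\<Sum>q<K. \<Sum>k<n. \<Sum>i<n. cnj (w q k) * D $$ (k, i) * w q i)"
    by (subst sum.swap, subst (2) sum.swap, subst sum.swap) (rule refl)
  also have "\<dots> = (\<Sum>q<K. quad_form n (\<lambda>i j. D $$ (i, j)) (w q))"
    unfolding quad_form_def ..
  finally have "Re (mtrace (P * D)) = (\<Sum>q<K. Re (quad_form n (\<lambda>i j. D $$ (i, j)) (w q)))"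
    by (simp add: Re_sum)
  also have "\<dots> \<ge> 0"
    using psd_imp_psd_kernel[OF D] unfolding psd_kernel_def by (intro sum_nonneg) blast
  finally show ?thesis .
qed

lemma mtrace_add:
  "A \<in> carrier_mat n n \<Longrightarrow> B \<in> carrier_mat n n \<Longrightarrow> mtrace (A + B) = mtrace A + mtrace B"
  unfolding mtrace_def by (simp add: sum.distrib)

lemma mtrace_minus:
  "A \<in> carrier_mat n n \<Longrightarrow> B \<in> carrier_mat n n \<Longrightarrow> mtrace (A - B) = mtrace A - mtrace B"
  unfolding mtrace_def by (simp add: sum_subtractf)

lemma mtrace_mult_msum:
  assumes P: "is_gram_matrix n P" "P \<in> carrier_mat n n" and Ds: "\<forall>D\<in>set Ds. psd n D"
  shows "msum n Ds \<in> carrier_mat n n \<and> 0 \<le> Re (mtrace (P * msum n Ds)) \<and>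
    (\<forall>D\<in>set Ds. Re (mtrace (P * D)) \<le> Re (mtrace (P * msum n Ds)))"
  using Ds
proof (induction Ds)
  case Nil
  then show ?case using P(2) by (simp add: msum_def mtrace_def)
next
  case (Cons D Ds)
  have D: "psd n D" "D \<in> carrier_mat n n"
    using Cons.prems unfolding psd_def by auto
  from Cons have S: "msum n Ds \<in> carrier_mat n n" "0 \<le> Re (mtrace (P * msum n Ds))"
    "\<forall>D'\<in>set Ds. Re (mtrace (P * D')) \<le> Re (mtrace (P * msum n Ds))"
    by auto
  have "mtrace (P * msum n (D # Ds)) = mtrace (P * D) + mtrace (P * msum n Ds)"
    using mult_add_distrib_mat[OF P(2) D(2) S(1)]
      mtrace_add[OF mult_carrier_mat[OF P(2) D(2)] mult_carrier_mat[OF P(2) S(1)]]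
    by (simp add: msum_def)
  then show ?case
    using S mtrace_mult_psd_nonneg[OF P D(1)] D(2) by (auto simp: msum_def)
qed

lemma mtrace_mult_povm_element_bounds:
  assumes \<rho>: "is_gram_matrix n \<rho>" "\<rho> \<in> carrier_mat n n" "mtrace \<rho> = 1"
    and Ds: "\<forall>D\<in>set Ds. psd n D" "psd n (1\<^sub>m n - msum n Ds)" and "D \<in> set Ds"
  shows "0 \<le> Re (mtrace (\<rho> * D)) \<and> Re (mtrace (\<rho> * D)) \<le> 1"
proof -
  have S: "msum n Ds \<in> carrier_mat n n" "Re (mtrace (\<rho> * D)) \<le> Re (mtrace (\<rho> * msum n Ds))"
    using mtrace_mult_msum[OF \<rho>(1,2) Ds(1)] \<open>D \<in> set Ds\<close> by auto
  have "mtrace (\<rho> * (1\<^sub>m n - msum n Ds)) = 1 - mtrace (\<rho> * msum n Ds)"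
    using mult_minus_distrib_mat[OF \<rho>(2) one_carrier_mat S(1)] \<rho>(2,3)
      mtrace_minus[OF \<rho>(2) mult_carrier_mat[OF \<rho>(2) S(1)]]
    by simp
  then have "Re (mtrace (\<rho> * msum n Ds)) \<le> 1"
    using mtrace_mult_psd_nonneg[OF \<rho>(1,2) Ds(2)] by simp
  then show ?thesis
    using S(2) mtrace_mult_psd_nonneg[OF \<rho>(1,2)] Ds(1) \<open>D \<in> set Ds\<close> by auto
qed

lemma add_mult_less_mult: "j < b \<Longrightarrow> i < a \<Longrightarrow> j + i * b < a * (b :: nat)"
proof -
  assume "j < b" "i < a"
  then have "Suc i * b \<le> a * b" by (intro mult_le_mono1) simp
  then show ?thesis using \<open>j < b\<close> by simp
qed

lemma kron_carrier_mat:
  "P \<in> carrier_mat a a \<Longrightarrow> Q \<in> carrier_mat b b \<Longrightarrow> kron P Q \<in> carrier_mat (a * b) (a * b)"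
  unfolding kron_def carrier_mat_def by simp

lemma index_kron:
  assumes "P \<in> carrier_mat a a" "Q \<in> carrier_mat b b" "i < a * b" "j < a * b"
  shows "kron P Q $$ (i, j) = P $$ (i div b, j div b) * Q $$ (i mod b, j mod b)"
  using assms unfolding kron_def by auto

lemma mtrace_kron:
  assumes P: "P \<in> carrier_mat a a" and Q: "Q \<in> carrier_mat b b"
  shows "mtrace (kron P Q) = mtrace P * mtrace Q"
proof -
  have "mtrace (kron P Q) = (\<Sum>i<a. \<Sum>j<b. kron P Q $$ (j + i * b, j + i * b))"
    unfolding mtrace_def using kron_carrier_mat[OF P Q] by (simp add: sum_mult_product)
  also have "\<dots> = (\<Sum>i<a. \<Sum>j<b. P $$ (i, i) * Q $$ (j, j))"
    by (intro sum.cong refl) (simp add: index_kron[OF P Q] add_mult_less_mult)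
  also have "\<dots> = mtrace P * mtrace Q"
    unfolding mtrace_def using P Q by (simp add: sum_product)
  finally show ?thesis .
qed

lemma is_gram_matrix_kron:
  assumes P: "P \<in> carrier_mat a a" "is_gram_matrix a P" and Q: "Q \<in> carrier_mat b b" "is_gram_matrix b Q"
  shows "is_gram_matrix (a * b) (kron P Q)"
proof -
  obtain K1 :: nat and v where v: "\<forall>i<a. \<forall>j<a. P $$ (i, j) = (\<Sum>q<K1. v q i * cnj (v q j))"
    using P(2) unfolding is_gram_matrix_def by blast
  obtain K2 :: nat and w where w: "\<forall>i<b. \<forall>j<b. Q $$ (i, j) = (\<Sum>q<K2. w q i * cnj (w q j))"
    using Q(2) unfolding is_gram_matrix_def by blast
  define u where "u q k = v (q div K2) (k div b) * w (q mod K2) (k mod b)" for q k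
  have "kron P Q $$ (i, j) = (\<Sum>q<K1 * K2. u q i * cnj (u q j))" if ij: "i < a * b" "j < a * b" for i j
  proof -
    have "0 < b"
      using ij by (cases b) auto
    then have "i div b < a" "j div b < a" "i mod b < b" "j mod b < b"
      using ij by (auto simp: less_mult_imp_div_less)
    then have "kron P Q $$ (i, j) =
        (\<Sum>x<K1. \<Sum>y<K2. v x (i div b) * w y (i mod b) * cnj (v x (j div b) * w y (j mod b)))"
      using index_kron[OF P(1) Q(1) ij] v w by (simp add: sum_product mult_ac)
    also have "\<dots> = (\<Sum>q<K1 * K2. u q i * cnj (u q j))"
      by (simp add: sum_mult_product u_def)
    finally show ?thesis .
  qed
  then show ?thesis unfolding is_gram_matrix_def by blast
qed

lemma tensor_list_gram_state:
  assumes "\<forall>B\<in>set Bs. B \<in> carrier_mat d d \<and> mtrace B = 1 \<and> is_gram_matrix d B"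
  shows "tensor_list Bs \<in> carrier_mat (d ^ length Bs) (d ^ length Bs) \<and>
    mtrace (tensor_list Bs) = 1 \<and> is_gram_matrix (d ^ length Bs) (tensor_list Bs)"
  using assms
proof (induction Bs)
  case Nil
  have "is_gram_matrix 1 (1\<^sub>m 1)"
    unfolding is_gram_matrix_def by (intro exI[of _ "1::nat"] exI[of _ "\<lambda>q i. 1"]) auto
  then show ?case unfolding tensor_list_def mtrace_def by auto
next
  case (Cons B Bs)
  have "tensor_list (B # Bs) = kron B (tensor_list Bs)"
    unfolding tensor_list_def by simp
  then show ?case
    using Cons kron_carrier_mat mtrace_kron is_gram_matrix_kron by auto
qed

lemma prod_channel_gram_state:
  assumes "\<forall>s. cq_channel d (A s)" and "length ss = l" "length xs = l"
  shows "prod_channel A ss xs \<in> carrier_mat (d ^ l) (d ^ l) \<and> mtrace (prod_channel A ss xs) = 1 \<and>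
    is_gram_matrix (d ^ l) (prod_channel A ss xs)"
proof -
  have "\<forall>B\<in>set (map2 A ss xs). B \<in> carrier_mat d d \<and> mtrace B = 1 \<and> is_gram_matrix d B"
    using assms(1) psd_imp_is_gram_matrix
    by (auto simp: cq_channel_def density_def psd_def dest!: set_zip_leftD set_zip_rightD)
  then show ?thesis
    using tensor_list_gram_state[of "map2 A ss xs" d] assms(2,3) by (simp add: prod_channel_def)
qed

lemma avg_success_bounds:
  assumes "\<forall>s. cq_channel d (A s)" and "det_code d l M c" and "length ss = l"
  shows "0 \<le> avg_success A ss c \<and> avg_success A ss c \<le> 1"
proof -
  have term_bounds: "0 \<le> Re (mtrace (prod_channel A ss (fst (c ! i)) * snd (c ! i))) \<and>
      Re (mtrace (prod_channel A ss (fst (c ! i)) * snd (c ! i))) \<le> 1" if "i < length c" for i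
  proof (rule mtrace_mult_povm_element_bounds)
    show "\<forall>D\<in>set (map snd c). psd (d ^ l) D"
    proof
      fix D assume "D \<in> set (map snd c)"
      then obtain j where "j < length c" "D = snd (c ! j)"
        by (auto simp: in_set_conv_nth)
      then show "psd (d ^ l) D"
        using assms(2) by (simp add: det_code_def)
    qed
  qed (use assms that prod_channel_gram_state[OF assms(1,3)] in \<open>auto simp: det_code_def\<close>)
  have "0 \<le> (\<Sum>i<length c. Re (mtrace (prod_channel A ss (fst (c ! i)) * snd (c ! i))))"
    using term_bounds by (intro sum_nonneg) auto
  moreover have "(\<Sum>i<length c. Re (mtrace (prod_channel A ss (fst (c ! i)) * snd (c ! i))))
      \<le> (\<Sum>i<length c. 1)"
    using term_bounds by (intro sum_mono) auto
  ultimately show ?thesis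
    unfolding avg_success_def by (cases "length c = 0") (auto simp: field_simps)
qed

section \<open>Derandomization\<close>

lemma powr_le_one_plus_mult:
  fixes b y :: real
  assumes "0 < b" "0 \<le> y" "y \<le> 1"
  shows "b powr y \<le> 1 + (b - 1) * y"
proof -
  have "exp ((1 - y) *\<^sub>R 0 + y *\<^sub>R ln b) \<le> (1 - y) * exp 0 + y * exp (ln b)"
    using convex_onD[OF exp_convex, of y 0 "ln b"] assms(2,3) by simp
  then show ?thesis
    using assms(1) by (simp add: powr_def mult.commute algebra_simps)
qed

lemma (in prob_space) exists_le_expectation:
  fixes f :: "'a \<Rightarrow> real"
  assumes "integrable M f"
  obtains x where "x \<in> space M" "f x \<le> expectation f"
proof -
  have "\<exists>x\<in>space M. f x \<le> expectation f"
  proof (rule ccontr)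
    assume "\<not> ?thesis"
    then have "\<forall>x\<in>space M. expectation f < f x"
      by (simp add: not_le)
    then have "(\<integral>x. expectation f \<partial>M) < expectation f"
      using assms by (intro integral_less_AE_space) (auto simp: emeasure_space_1)
    then show False by (simp add: prob_space)
  qed
  then show ?thesis using that by blast
qed

text \<open>Method of conditional expectations: each new point is chosen below the mean of the
  weighted sum \<open>\<Sum>i. w i * f i\<close> with weights \<open>w i = \<Prod>j<k. f i (C j)\<close>.\<close>

lemma (in prob_space) exists_points_sum_prod_le:
  fixes f :: "'i \<Rightarrow> 'a \<Rightarrow> real"
  assumes "finite I"
    and "\<And>i. i \<in> I \<Longrightarrow> integrable M (f i)"
    and "\<And>i x. i \<in> I \<Longrightarrow> x \<in> space M \<Longrightarrow> 0 \<le> f i x"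
    and "\<And>i. i \<in> I \<Longrightarrow> expectation (f i) \<le> \<beta>"
  shows "\<exists>C. (\<forall>j<k. C j \<in> space M) \<and> (\<Sum>i\<in>I. \<Prod>j<k. f i (C j)) \<le> real (card I) * \<beta> ^ k"
proof (induction k)
  case 0
  then show ?case by simp
next
  case (Suc k)
  then obtain C where C: "\<forall>j<k. C j \<in> space M"
    and C_le: "(\<Sum>i\<in>I. \<Prod>j<k. f i (C j)) \<le> real (card I) * \<beta> ^ k"
    by blast
  define w where "w i = (\<Prod>j<k. f i (C j))" for i
  have w_nonneg: "0 \<le> w i" if "i \<in> I" for i
    using C assms(3)[OF that] by (auto simp: w_def intro: prod_nonneg)
  define g where "g x = (\<Sum>i\<in>I. w i * f i x)" for x
  have g: "integrable M g"
    unfolding g_def using assms(2) by auto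
  obtain c where c: "c \<in> space M" "g c \<le> expectation g"
    using exists_le_expectation[OF g] by blast
  have "expectation g = (\<Sum>i\<in>I. w i * expectation (f i))"
    unfolding g_def using assms(2) by (simp add: Bochner_Integration.integral_sum)
  also have "\<dots> \<le> (\<Sum>i\<in>I. w i * \<beta>)"
    using w_nonneg assms(4) by (intro sum_mono mult_left_mono) auto
  finally have "g c \<le> \<beta> * (\<Sum>i\<in>I. w i)"
    using c(2) by (simp add: sum_distrib_left mult.commute)
  also have "\<dots> \<le> \<beta> * (real (card I) * \<beta> ^ k)"
  proof (cases "I = {}")
    case False
    then obtain i where "i \<in> I" by blast
    have "0 \<le> expectation (f i)"
      using assms(3)[OF \<open>i \<in> I\<close>] by (intro integral_nonneg_AE) (auto intro: AE_I2)
    then have "0 \<le> \<beta>" using assms(4)[OF \<open>i \<in> I\<close>] by linarith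
    then show ?thesis using C_le by (intro mult_left_mono) (simp_all add: w_def)
  qed simp
  finally have "(\<Sum>i\<in>I. \<Prod>j<Suc k. f i ((C(k := c)) j)) \<le> real (card I) * \<beta> ^ Suc k"
    by (simp add: g_def w_def mult_ac)
  moreover have "\<forall>j<Suc k. (C(k := c)) j \<in> space M"
    using C c(1) by (simp add: less_Suc_eq)
  ultimately show ?case by blast
qed

lemma one_plus_power_le_two_powr:
  fixes \<epsilon> \<delta> :: real
  assumes "0 \<le> \<epsilon>" "4 * \<epsilon> \<le> \<delta>"
  shows "(1 + \<epsilon>) ^ N \<le> 2 powr (real N * \<delta> / 2)"
proof -
  have "\<delta> * (2 / 3) \<le> \<delta> * ln 2"
    using assms ln2_ge_two_thirds by (intro mult_left_mono) auto
  then have "\<epsilon> \<le> \<delta> / 2 * ln 2"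
    using assms by linarith
  have "(1 + \<epsilon>) ^ N \<le> exp \<epsilon> ^ N"
    using assms(1) by (intro power_mono) (auto simp: add.commute)
  also have "\<dots> = exp (real N * \<epsilon>)"
    by (simp add: exp_of_nat_mult)
  also have "\<dots> \<le> exp (real N * (\<delta> / 2 * ln 2))"
    using \<open>\<epsilon> \<le> \<delta> / 2 * ln 2\<close> by (intro exp_le_cancel_iff[THEN iffD2] mult_left_mono) auto
  also have "\<dots> = 2 powr (real N * \<delta> / 2)"
    by (simp add: powr_def)
  finally show ?thesis .
qed

lemma power_mult_one_plus_power_less_two_powr:
  fixes S l N :: nat and \<epsilon> n m :: real
  assumes "1 \<le> l" "1 \<le> S" "0 \<le> \<epsilon>"
    and "real l powr n = real N"
    and "4 * \<epsilon> \<le> real l powr (- m)"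
    and "2 * log 2 (real S) < real l powr (n - m - 1)"
  shows "real S ^ l * (1 + \<epsilon>) ^ N < 2 powr (real N * real l powr (- m))"
proof -
  define \<delta> where "\<delta> = real l powr (- m)"
  have l: "0 < real l"
    using assms(1) by simp
  have "real l powr (n - m - 1) = real l powr n * real l powr (- m) / real l"
    using l by (simp add: powr_diff powr_add [symmetric])
  then have "2 * log 2 (real S) < real N * \<delta> / real l"
    using assms(4,6) by (simp add: \<delta>_def)
  then have "real l * log 2 (real S) < real N * \<delta> / 2"
    using l by (simp add: field_simps)
  moreover have "real S ^ l = 2 powr (real l * log 2 (real S))"
  proof -
    have "real S ^ l = (2 powr log 2 (real S)) powr real l"
      using assms(2) by (simp add: powr_realpow)
    then show ?thesis by (simp add: powr_powr mult.commute)
  qed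
  ultimately have "real S ^ l < 2 powr (real N * \<delta> / 2)"
    by simp
  then have "real S ^ l * (1 + \<epsilon>) ^ N < 2 powr (real N * \<delta> / 2) * 2 powr (real N * \<delta> / 2)"
    using one_plus_power_le_two_powr[OF assms(3) assms(5)[folded \<delta>_def]] assms(3)
    by (intro mult_less_le_imp_less) auto
  also have "\<dots> = 2 powr (real N * \<delta>)"
    by (simp add: mult.commute flip: powr_add)
  finally show ?thesis unfolding \<delta>_def .
qed

lemma random_code_failure_moment:
  assumes "\<forall>s. cq_channel d (A s)" and \<mu>: "random_code d A l M \<mu>" and "length ss = l"
    and "1 - \<epsilon> \<le> (\<integral>c. avg_success A ss c \<partial>\<mu>)"
  shows "integrable \<mu> (\<lambda>c. 2 powr (1 - avg_success A ss c)) \<and>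
    (\<integral>c. 2 powr (1 - avg_success A ss c) \<partial>\<mu>) \<le> 1 + \<epsilon>"
proof -
  interpret prob_space \<mu>
    using \<mu> by (simp add: random_code_def)
  have bounds: "0 \<le> avg_success A ss c \<and> avg_success A ss c \<le> 1" if "c \<in> space \<mu>" for c
    using avg_success_bounds[OF assms(1) _ assms(3)] that \<mu> by (auto simp: random_code_def)
  have meas: "(\<lambda>c. avg_success A ss c) \<in> borel_measurable \<mu>"
    using \<mu> assms(3) by (simp add: random_code_def)
  have int: "integrable \<mu> (\<lambda>c. avg_success A ss c)"
    using bounds meas by (intro integrable_const_bound[where B = 1]) (auto intro: AE_I2)
  have int2: "integrable \<mu> (\<lambda>c. 2 powr (1 - avg_success A ss c))"
  proof (rule integrable_const_bound[where B = 2])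
    show "AE c in \<mu>. norm (2 powr (1 - avg_success A ss c)) \<le> 2"
      using bounds by (intro AE_I2) (auto intro: order.trans[OF powr_mono[of _ 1]])
  qed (use meas in measurable)
  have "(\<integral>c. 2 powr (1 - avg_success A ss c) \<partial>\<mu>) \<le> (\<integral>c. 2 - avg_success A ss c \<partial>\<mu>)"
  proof (rule integral_mono)
    fix c assume "c \<in> space \<mu>"
    then show "2 powr (1 - avg_success A ss c) \<le> 2 - avg_success A ss c"
      using powr_le_one_plus_mult[of 2 "1 - avg_success A ss c"] bounds by simp
  qed (use int int2 in auto)
  also have "\<dots> = 2 - (\<integral>c. avg_success A ss c \<partial>\<mu>)"
    using int by (simp add: prob_space)
  finally show ?thesis
    using int2 assms(4) by simp
qed

lemma random_code_exists_codes_potential_le: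
  fixes A :: "'s::finite \<Rightarrow> 'x \<Rightarrow> complex mat"
  assumes "\<forall>s. cq_channel d (A s)" and \<mu>: "random_code d A l M \<mu>"
    and "\<forall>ss. length ss = l \<longrightarrow> 1 - \<epsilon> \<le> (\<integral>c. avg_success A ss c \<partial>\<mu>)"
  shows "\<exists>C. (\<forall>j<N. C j \<in> space \<mu>) \<and>
    (\<Sum>ss | length ss = l. \<Prod>j<N. 2 powr (1 - avg_success A ss (C j))) \<le> real CARD('s) ^ l * (1 + \<epsilon>) ^ N"
proof -
  interpret prob_space \<mu>
    using \<mu> by (simp add: random_code_def)
  define SS where "SS = {ss :: 's list. length ss = l}"
  have SS: "finite SS" "card SS = CARD('s) ^ l"
    using finite_lists_length_eq[of "UNIV :: 's set" l] card_lists_length_eq[of "UNIV :: 's set" l]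
    by (simp_all add: SS_def)
  have "integrable \<mu> (\<lambda>c. 2 powr (1 - avg_success A ss c)) \<and>
      expectation (\<lambda>c. 2 powr (1 - avg_success A ss c)) \<le> 1 + \<epsilon>" if "ss \<in> SS" for ss
    using random_code_failure_moment[OF assms(1,2), of ss \<epsilon>] assms(3) that by (simp add: SS_def)
  then show ?thesis
    using exists_points_sum_prod_le[where I = SS and f = "\<lambda>ss c. 2 powr (1 - avg_success A ss c)"
        and \<beta> = "1 + \<epsilon>" and k = N] SS
    by (auto simp: SS_def)
qed

theorem lemma10:
  fixes A :: "'s::finite \<Rightarrow> 'x::finite \<Rightarrow> complex mat"
    and d l M N :: nat and \<mu> :: "('x list \<times> complex mat) list measure"
    and \<epsilon> n m :: real
  assumes "d \<ge> 1"
    and "\<forall>s. cq_channel d (A s)"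
    and "l \<ge> 1"
    and "random_code d A l M \<mu>"
    and "0 \<le> \<epsilon>" and "\<epsilon> < 1"
    and "\<forall>ss. length ss = l \<longrightarrow> (\<integral>c. avg_success A ss c \<partial>\<mu>) \<ge> 1 - \<epsilon>"
    and "real l powr n = real N"
    and "4 * \<epsilon> \<le> real l powr (- m)"
    and "2 * log 2 (real CARD('s)) < real l powr (n - m - 1)"
  shows "\<exists>C :: nat \<Rightarrow> ('x list \<times> complex mat) list.
           (\<forall>j<N. det_code d l M (C j)) \<and>
           (\<forall>ss. length ss = l \<longrightarrow>
              (1 / real N) * (\<Sum>j<N. avg_success A ss (C j)) \<ge> 1 - real l powr (- m))"
proof -
  let ?Y = "\<lambda>ss c. 2 powr (1 - avg_success A ss c)"
  obtain C where C: "\<forall>j<N. C j \<in> space \<mu>"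
    and C_le: "(\<Sum>ss | length ss = l. \<Prod>j<N. ?Y ss (C j)) \<le> real CARD('s) ^ l * (1 + \<epsilon>) ^ N"
    using random_code_exists_codes_potential_le[OF assms(2,4,7)] by blast
  note C_le
  also have "\<dots> < 2 powr (real N * real l powr (- m))"
    using power_mult_one_plus_power_less_two_powr[OF assms(3) _ assms(5,8,9,10)] by (simp add: Suc_leI)
  finally have potential_lt: "(\<Sum>ss | length ss = l. \<Prod>j<N. ?Y ss (C j)) < 2 powr (real N * real l powr (- m))" .
  have "0 < real N"
    unfolding assms(8)[symmetric] using assms(3) by simp
  show ?thesis
  proof (intro exI[of _ C] conjI allI impI)
    show "j < N \<Longrightarrow> det_code d l M (C j)" for j
      using C assms(4) by (auto simp: random_code_def)
  next
    fix ss :: "'s list" assume "length ss = l"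
    then have "2 powr (\<Sum>j<N. 1 - avg_success A ss (C j)) \<le> (\<Sum>ss | length ss = l. \<Prod>j<N. ?Y ss (C j))"
      using finite_lists_length_eq[of "UNIV :: 's set" l]
      by (auto simp: powr_sum intro!: member_le_sum prod_nonneg)
    then have "2 powr (\<Sum>j<N. 1 - avg_success A ss (C j)) < 2 powr (real N * real l powr (- m))"
      using potential_lt by linarith
    then have "(\<Sum>j<N. 1 - avg_success A ss (C j)) < real N * real l powr (- m)"
      by simp
    then show "1 - real l powr (- m) \<le> 1 / real N * (\<Sum>j<N. avg_success A ss (C j))"
      using \<open>0 < real N\<close> by (simp add: sum_subtractf field_simps)
  qed
qed

end
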